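(* Let $\mathcal{V}$ be a non-trivial quantale, $\mathsf{F}\colon\mathbf{Set}\to\mathbf{Set}$ a functor and $\lambda$ a $\kappa$-ary $\mathcal{V}$-valued predicate lifting for $\mathsf{F}$. The Kantorovich lifting $\mathsf{F}^\lambda$ of $\mathsf{F}$ with respect to $\{\lambda\}$ sends a $\mathcal{V}$-category $(X,a)$ to $(\mathsf{F}X,\mathsf{F}^\lambda a)$ where $\mathsf{F}^\lambda a=\bigwedge_{r\colon(\kappa,1_\kappa)\nrightarrow(X,a)\text{ distributor}}\lambda(r)\multimap\lambda(r)$.
   Context: A quantale $(\mathcal{V},\otimes,k)$ is a complete lattice with commutative monoid structure, each $u\otimes-$ preserving joins, $\hom(u,-)$ its right adjoint; non-trivial: $\bot\ne\top$. $\mathcal{V}$-categories $(X,a)$: $k\le a(x,x)$, $a(x,y)\otimes a(y,z)\le a(x,z)$; $\mathcal{V}$-functors: $a(x,y)\le b(fx,fy)$. $\mathcal{V}$-relations $r\colon X\nrightarrow Y$ are maps $X\times Y\to\mathcal{V}$, composed by $(s\cdot r)(x,z)=\bigvee_y r(x,y)\otimes s(y,z)$; $1_\kappa$ is $k$ on the diagonal and $\bot$ elsewhere. For $r\colon X\nrightarrow Y$, $s\colon X\nrightarrow Z$, $(r\multimap s)(z,y)=\bigwedge_x\hom(s(x,z),r(x,y))$. A distributor $r\colon(\kappa,1_\kappa)\nrightarrow(X,a)$ is a $\mathcal{V}$-relation $r\colon\kappa\nrightarrow X$ with $a\cdot r\le r$. A $\kappa$-ary $\mathcal{V}$-valued predicate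 lifting is a natural transformation $\lambda\colon\mathbf{Set}(-,\mathcal{V}^\kappa)\to\mathbf{Set}(\mathsf{F}-,\mathcal{V})$; identifying $f\colon X\to\mathcal{V}^\kappa$ with the relation $\kappa\nrightarrow X$, $(i,x)\mapsto f(x)(i)$, and maps $\mathsf{F}X\to\mathcal{V}$ with relations $1\nrightarrow\mathsf{F}X$, $\lambda$ maps relations $\kappa\nrightarrow X$ to relations $1\nrightarrow\mathsf{F}X$. The Kantorovich lifting $\mathsf{F}^\lambda$ sends $(X,a)$ to $\mathsf{F}X$ with structure $c(\mathfrak{x},\mathfrak{y})=\bigwedge_f\hom(\lambda_X(f)(\mathfrak{x}),\lambda_X(f)(\mathfrak{y}))$, over all $\mathcal{V}$-functors $f\colon(X,a)\to\mathcal{V}^\kappa$, where $\mathcal{V}^\kappa$ has $[f,g]=\bigwedge_i\hom(f(i),g(i))$. *)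

theory Defs
  imports Main "HOL-Library.FuncSet"
begin

definition quantale :: "('v::complete_lattice \<Rightarrow> 'v \<Rightarrow> 'v) \<Rightarrow> 'v \<Rightarrow> bool" where
  "quantale tn k \<longleftrightarrow>
     (\<forall>u v w. tn (tn u v) w = tn u (tn v w)) \<and>
     (\<forall>u v. tn u v = tn v u) \<and>
     (\<forall>u. tn k u = u) \<and>
     (\<forall>u S. tn u (Sup S) = Sup (tn u ` S))"

definition qhom :: "('v::complete_lattice \<Rightarrow> 'v \<Rightarrow> 'v) \<Rightarrow> 'v \<Rightarrow> 'v \<Rightarrow> 'v" where
  "qhom tn u v = Sup {w. tn u w \<le> v}"

definition vcat :: "('v::complete_lattice \<Rightarrow> 'v \<Rightarrow> 'v) \<Rightarrow> 'v \<Rightarrow> 'x set \<Rightarrow> ('x \<Rightarrow> 'x \<Rightarrow> 'v) \<Rightarrow> bool" where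
  "vcat tn k X a \<longleftrightarrow>
     (\<forall>x\<in>X. k \<le> a x x) \<and>
     (\<forall>x\<in>X. \<forall>y\<in>X. \<forall>z\<in>X. tn (a x y) (a y z) \<le> a x z)"

definition powstruct :: "('v::complete_lattice \<Rightarrow> 'v \<Rightarrow> 'v) \<Rightarrow> 'k set \<Rightarrow> ('k \<Rightarrow> 'v) \<Rightarrow> ('k \<Rightarrow> 'v) \<Rightarrow> 'v" where
  "powstruct tn K f g = Inf {qhom tn (f i) (g i) | i. i \<in> K}"

definition vfunctor_pow :: "('v::complete_lattice \<Rightarrow> 'v \<Rightarrow> 'v) \<Rightarrow> 'x set \<Rightarrow> ('x \<Rightarrow> 'x \<Rightarrow> 'v) \<Rightarrow> 'k set
     \<Rightarrow> ('x \<Rightarrow> 'k \<Rightarrow> 'v) \<Rightarrow> bool" where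
  "vfunctor_pow tn X a K f \<longleftrightarrow>
     f \<in> X \<rightarrow>\<^sub>E (K \<rightarrow>\<^sub>E UNIV) \<and> (\<forall>x\<in>X. \<forall>y\<in>X. a x y \<le> powstruct tn K (f x) (f y))"

definition vrel :: "'a set \<Rightarrow> 'b set \<Rightarrow> ('a \<Rightarrow> 'b \<Rightarrow> 'v) \<Rightarrow> bool" where
  "vrel A B r \<longleftrightarrow> (\<forall>x y. (x \<notin> A \<or> y \<notin> B) \<longrightarrow> r x y = undefined)"

definition rcomp :: "('v::complete_lattice \<Rightarrow> 'v \<Rightarrow> 'v) \<Rightarrow> 'b set \<Rightarrow> ('b \<Rightarrow> 'c \<Rightarrow> 'v) \<Rightarrow> ('a \<Rightarrow> 'b \<Rightarrow> 'v) \<Rightarrow> 'a \<Rightarrow> 'c \<Rightarrow> 'v" where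
  "rcomp tn B s r x z = Sup {tn (r x y) (s y z) | y. y \<in> B}"

definition rimp :: "('v::complete_lattice \<Rightarrow> 'v \<Rightarrow> 'v) \<Rightarrow> 'a set \<Rightarrow> ('a \<Rightarrow> 'b \<Rightarrow> 'v) \<Rightarrow> ('a \<Rightarrow> 'c \<Rightarrow> 'v) \<Rightarrow> 'c \<Rightarrow> 'b \<Rightarrow> 'v" where
  "rimp tn A r s z y = Inf {qhom tn (s x z) (r x y) | x. x \<in> A}"

text \<open>A distributor (K, 1_K) -/-> (X, a): a V-relation r : K -/-> X with a . r <= r.\<close>
definition distributor :: "('v::complete_lattice \<Rightarrow> 'v \<Rightarrow> 'v) \<Rightarrow> 'k set \<Rightarrow> 'x set \<Rightarrow> ('x \<Rightarrow> 'x \<Rightarrow> 'v)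
     \<Rightarrow> ('k \<Rightarrow> 'x \<Rightarrow> 'v) \<Rightarrow> bool" where
  "distributor tn K X a r \<longleftrightarrow> vrel K X r \<and> (\<forall>i\<in>K. \<forall>y\<in>X. rcomp tn X a r i y \<le> r i y)"

text \<open>We model Set by the category of all subsets of a universe type 'u with
  (extensional) maps; a functor assigns to each A :: 'u set a set Fobj A :: 'w set and
  to each map g : A -> B a map Fmap A B g : Fobj A -> Fobj B.\<close>
definition set_functor :: "('u set \<Rightarrow> 'w set) \<Rightarrow> ('u set \<Rightarrow> 'u set \<Rightarrow> ('u \<Rightarrow> 'u) \<Rightarrow> 'w \<Rightarrow> 'w) \<Rightarrow> bool" where
  "set_functor Fobj Fmap \<longleftrightarrow>
     (\<forall>A B g. g \<in> A \<rightarrow>\<^sub>E B \<longrightarrow> Fmap A B g \<in> Fobj A \<rightarrow>\<^sub>E Fobj B) \<and>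
     (\<forall>A. Fmap A A (restrict id A) = restrict id (Fobj A)) \<and>
     (\<forall>A B C g h. g \<in> A \<rightarrow>\<^sub>E B \<longrightarrow> h \<in> B \<rightarrow>\<^sub>E C \<longrightarrow>
        Fmap A C (compose A h g) = compose (Fobj A) (Fmap B C h) (Fmap A B g))"

definition pred_lifting :: "('u set \<Rightarrow> 'w set) \<Rightarrow> ('u set \<Rightarrow> 'u set \<Rightarrow> ('u \<Rightarrow> 'u) \<Rightarrow> 'w \<Rightarrow> 'w) \<Rightarrow> 'k set
     \<Rightarrow> ('u set \<Rightarrow> ('u \<Rightarrow> 'k \<Rightarrow> 'v) \<Rightarrow> 'w \<Rightarrow> 'v) \<Rightarrow> bool" where
  "pred_lifting Fobj Fmap K lam \<longleftrightarrow>
     (\<forall>A f. f \<in> A \<rightarrow>\<^sub>E (K \<rightarrow>\<^sub>E UNIV) \<longrightarrow> lam A f \<in> Fobj A \<rightarrow>\<^sub>E UNIV) \<and>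
     (\<forall>A B g f. g \<in> A \<rightarrow>\<^sub>E B \<longrightarrow> f \<in> B \<rightarrow>\<^sub>E (K \<rightarrow>\<^sub>E UNIV) \<longrightarrow>
        lam A (compose A f g) = compose (Fobj A) (lam B f) (Fmap A B g))"

definition rel_to_map :: "'k set \<Rightarrow> 'x set \<Rightarrow> ('k \<Rightarrow> 'x \<Rightarrow> 'v) \<Rightarrow> 'x \<Rightarrow> 'k \<Rightarrow> 'v" where
  "rel_to_map K X r = (\<lambda>x\<in>X. \<lambda>i\<in>K. r i x)"

text \<open>lam applied to a relation r : K -/-> X, giving a relation 1 -/-> F X.\<close>
definition lam_rel :: "('u set \<Rightarrow> ('u \<Rightarrow> 'k \<Rightarrow> 'v) \<Rightarrow> 'w \<Rightarrow> 'v) \<Rightarrow> 'k set \<Rightarrow> 'u set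
     \<Rightarrow> ('k \<Rightarrow> 'u \<Rightarrow> 'v) \<Rightarrow> unit \<Rightarrow> 'w \<Rightarrow> 'v" where
  "lam_rel lam K X r = (\<lambda>_ w. lam X (rel_to_map K X r) w)"

definition kantorovich :: "('v::complete_lattice \<Rightarrow> 'v \<Rightarrow> 'v) \<Rightarrow> 'k set
     \<Rightarrow> ('u set \<Rightarrow> ('u \<Rightarrow> 'k \<Rightarrow> 'v) \<Rightarrow> 'w \<Rightarrow> 'v) \<Rightarrow> 'u set \<Rightarrow> ('u \<Rightarrow> 'u \<Rightarrow> 'v) \<Rightarrow> 'w \<Rightarrow> 'w \<Rightarrow> 'v" where
  "kantorovich tn K lam X a p q =
     Inf {qhom tn (lam X f p) (lam X f q) | f. vfunctor_pow tn X a K f}"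

end

theory Submission
  imports Defs
begin

text \<open>A \<open>\<V>\<close>-functor \<open>f : (X, a) \<rightarrow> \<V>\<^sup>\<kappa>\<close> is the same thing as a distributor
  \<open>r : (\<kappa>, 1\<^sub>\<kappa>) -/-> (X, a)\<close>, via \<open>r(i, x) = f(x)(i)\<close>: by the adjunction between \<open>u \<otimes> -\<close>
  and \<open>hom(u, -)\<close>, \<open>a(x, y) \<le> hom(r(i, x), r(i, y))\<close> for all \<open>i\<close> says exactly \<open>a \<cdot> r \<le> r\<close>.
  Since \<open>(\<lambda>(r) -o \<lambda>(r))(p, q) = hom(\<lambda>(r)(p), \<lambda>(r)(q))\<close>, the two infima range over the same
  set of values.\<close>

lemma quantale_tensor_mono:
  assumes "quantale tn k" and "x \<le> y"
  shows "tn u x \<le> tn u (y::'v::complete_lattice)"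
proof -
  have "tn u (Sup {x, y}) = Sup (tn u ` {x, y})"
    using assms(1) unfolding quantale_def by blast
  moreover have "Sup {x, y} = y"
    using assms(2) by (simp add: sup_absorb2)
  ultimately show ?thesis
    by (metis Sup_upper image_insert insertI1)
qed

lemma quantale_tensor_qhom_le:
  assumes "quantale tn k"
  shows "tn u (qhom tn u v) \<le> (v::'v::complete_lattice)"
proof -
  have "tn u (qhom tn u v) = Sup (tn u ` {w. tn u w \<le> v})"
    using assms unfolding quantale_def qhom_def by blast
  also have "\<dots> \<le> v"
    by (auto intro: Sup_least)
  finally show ?thesis .
qed

lemma quantale_le_qhom_iff:
  assumes "quantale tn k"
  shows "w \<le> qhom tn u v \<longleftrightarrow> tn u w \<le> (v::'v::complete_lattice)"
proof
  assume "w \<le> qhom tn u v"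
  then have "tn u w \<le> tn u (qhom tn u v)"
    by (rule quantale_tensor_mono[OF assms])
  also have "\<dots> \<le> v"
    by (rule quantale_tensor_qhom_le[OF assms])
  finally show "tn u w \<le> v" .
next
  assume "tn u w \<le> v"
  then show "w \<le> qhom tn u v"
    unfolding qhom_def by (auto intro: Sup_upper)
qed

lemma distributor_iff_vfunctor_pow_rel_to_map:
  assumes "quantale tn k" and "vrel K X r"
  shows "distributor tn K X a r \<longleftrightarrow> vfunctor_pow tn X a K (rel_to_map K X r)"
proof -
  have "distributor tn K X a r \<longleftrightarrow>
      (\<forall>i\<in>K. \<forall>y\<in>X. \<forall>x\<in>X. tn (r i x) (a x y) \<le> r i y)"
    using assms(2) unfolding distributor_def rcomp_def
    by (auto simp: Sup_le_iff)
  also have "\<dots> \<longleftrightarrow> (\<forall>x\<in>X. \<forall>y\<in>X. \<forall>i\<in>K. a x y \<le> qhom tn (r i x) (r i y))"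
    using quantale_le_qhom_iff[OF assms(1)] by blast
  also have "\<dots> \<longleftrightarrow> vfunctor_pow tn X a K (rel_to_map K X r)"
    unfolding vfunctor_pow_def powstruct_def rel_to_map_def by (auto simp: le_Inf_iff)
  finally show ?thesis .
qed

lemma ex_vrel_rel_to_map_eq:
  assumes "f \<in> X \<rightarrow>\<^sub>E (K \<rightarrow>\<^sub>E UNIV)"
  shows "\<exists>r. vrel K X r \<and> f = rel_to_map K X r"
proof (intro exI conjI)
  let ?r = "\<lambda>i x. if i \<in> K \<and> x \<in> X then f x i else undefined"
  show "vrel K X ?r"
    unfolding vrel_def by auto
  show "f = rel_to_map K X ?r"
  proof (intro ext)
    fix x i
    show "f x i = rel_to_map K X ?r x i"
      using assms unfolding rel_to_map_def
      by (cases "x \<in> X"; cases "i \<in> K") (auto simp: PiE_def extensional_def)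
  qed
qed

lemma vfunctor_pow_eq_rel_to_map_distributor:
  assumes "quantale tn k"
  shows "{f. vfunctor_pow tn X a K f} = rel_to_map K X ` {r. distributor tn K X a r}"
proof (intro set_eqI iffI)
  fix f
  assume "f \<in> {f. vfunctor_pow tn X a K f}"
  then have vf: "vfunctor_pow tn X a K f" by simp
  then have "f \<in> X \<rightarrow>\<^sub>E (K \<rightarrow>\<^sub>E UNIV)"
    unfolding vfunctor_pow_def by (rule conjunct1)
  then obtain r where r: "vrel K X r" and f: "f = rel_to_map K X r"
    using ex_vrel_rel_to_map_eq by blast
  have "distributor tn K X a r"
    using distributor_iff_vfunctor_pow_rel_to_map[OF assms r] vf unfolding f by (rule iffD2)
  with f show "f \<in> rel_to_map K X ` {r. distributor tn K X a r}" by blast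
next
  fix f
  assume "f \<in> rel_to_map K X ` {r. distributor tn K X a r}"
  then obtain r where r: "distributor tn K X a r" and f: "f = rel_to_map K X r" by blast
  have "vrel K X r"
    using r unfolding distributor_def by simp
  with r have "vfunctor_pow tn X a K (rel_to_map K X r)"
    using distributor_iff_vfunctor_pow_rel_to_map[OF assms] by blast
  with f show "f \<in> {f. vfunctor_pow tn X a K f}" by simp
qed

lemma rimp_lam_rel_self:
  "rimp tn (UNIV::unit set) (lam_rel lam K X r) (lam_rel lam K X r) p q
     = qhom tn (lam X (rel_to_map K X r) p) (lam X (rel_to_map K X r) q)"
  unfolding rimp_def lam_rel_def by simp

theorem proposition5:
  fixes tn :: "'v::complete_lattice \<Rightarrow> 'v \<Rightarrow> 'v" and k :: 'v
    and Fobj :: "'u set \<Rightarrow> 'w set" and Fmap :: "'u set \<Rightarrow> 'u set \<Rightarrow> ('u \<Rightarrow> 'u) \<Rightarrow> 'w \<Rightarrow> 'w"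
    and K :: "'k set" and lam :: "'u set \<Rightarrow> ('u \<Rightarrow> 'k \<Rightarrow> 'v) \<Rightarrow> 'w \<Rightarrow> 'v"
    and X :: "'u set" and a :: "'u \<Rightarrow> 'u \<Rightarrow> 'v"
  assumes "quantale tn k" and "(bot::'v) \<noteq> top"
    and "set_functor Fobj Fmap" and "pred_lifting Fobj Fmap K lam"
    and "vcat tn k X a"
  shows "\<forall>p\<in>Fobj X. \<forall>q\<in>Fobj X.
           kantorovich tn K lam X a p q =
           Inf {rimp tn (UNIV::unit set) (lam_rel lam K X r) (lam_rel lam K X r) p q
                | r. distributor tn K X a r}"
proof (intro ballI)
  fix p q
  let ?hom = "\<lambda>f. qhom tn (lam X f p) (lam X f q)"
  have "kantorovich tn K lam X a p q = Inf (?hom ` {f. vfunctor_pow tn X a K f})"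
    unfolding kantorovich_def by (simp only: setcompr_eq_image)
  also have "\<dots> = Inf (?hom ` rel_to_map K X ` {r. distributor tn K X a r})"
    by (simp only: vfunctor_pow_eq_rel_to_map_distributor[OF assms(1)])
  also have "\<dots> = Inf {rimp tn (UNIV::unit set) (lam_rel lam K X r) (lam_rel lam K X r) p q
                      | r. distributor tn K X a r}"
    by (simp only: rimp_lam_rel_self setcompr_eq_image image_image)
  finally show "kantorovich tn K lam X a p q =
      Inf {rimp tn (UNIV::unit set) (lam_rel lam K X r) (lam_rel lam K X r) p q
           | r. distributor tn K X a r}" .
qed

end
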